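(* Let $p,q$ be distinct primes and $n\geqslant m\geqslant2$ with $n+m$ even. Then there exists a set of non-identity arrows of $C_{p^nq^m}$ which is a minimal generating set of the transfer system it generates and whose cardinality is $|R_{(n+m)/2}|+2$.
   Context: For a finite group $G$, an arrow is a pair $(H,K)$ of subgroups with $H\leqslant K$; identity arrows are those with $H=K$. A $G$-transfer system is a set of arrows containing all identities and closed under composition ($(H,K),(K,L)\Rightarrow(H,L)$), conjugation ($(H,K)\Rightarrow(gHg^{-1},gKg^{-1})$) and restriction ($(H,K)$ and $L\leqslant K\Rightarrow(H\cap L,L)$). For a set $S$ of non-identity arrows, $\langle S\rangle$ is the smallest transfer system containing $S$; $S$ is a minimal generating set of $\langle S\rangle$ if $\langle S\setminus\{s\}\rangle\neq\langle S\rangle$ for all $s\in S$. In $C_{p^nq^m}$ let $C_{p^aq^x}$ be the unique subgroup of order $p^aq^x$, and write $(a,x;b,y)$ for the arrow $(C_{p^aq^x},C_{p^bq^y})$ with $a\leqslant b$, $x\leqslant y$. Its midpoint is $(a+x+b+y)/2$. For a half-integer or integer $M$, $R_M$ is the set of all non-identity arrows of $C_{p^nq^m}$ with midpoint $M$. *)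

theory Defs
  imports "HOL-Algebra.Algebra" "HOL-Computational_Algebra.Primes"
begin

definition arrows :: "('a, 'b) monoid_scheme \<Rightarrow> ('a set \<times> 'a set) set" where
  "arrows G = {(H, K). subgroup H G \<and> subgroup K G \<and> H \<subseteq> K}"

definition conjset :: "('a, 'b) monoid_scheme \<Rightarrow> 'a \<Rightarrow> 'a set \<Rightarrow> 'a set" where
  "conjset G g H = (g <#\<^bsub>G\<^esub> H) #>\<^bsub>G\<^esub> inv\<^bsub>G\<^esub> g"

definition is_transfer_system :: "('a, 'b) monoid_scheme \<Rightarrow> ('a set \<times> 'a set) set \<Rightarrow> bool" where
  "is_transfer_system G T \<longleftrightarrow>
     T \<subseteq> arrows G \<and>
     (\<forall>H. subgroup H G \<longrightarrow> (H, H) \<in> T) \<and>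
     (\<forall>H K L. (H, K) \<in> T \<and> (K, L) \<in> T \<longrightarrow> (H, L) \<in> T) \<and>
     (\<forall>H K g. (H, K) \<in> T \<and> g \<in> carrier G \<longrightarrow> (conjset G g H, conjset G g K) \<in> T) \<and>
     (\<forall>H K L. (H, K) \<in> T \<and> subgroup L G \<and> L \<subseteq> K \<longrightarrow> (H \<inter> L, L) \<in> T)"

definition generated_ts :: "('a, 'b) monoid_scheme \<Rightarrow> ('a set \<times> 'a set) set \<Rightarrow> ('a set \<times> 'a set) set" where
  "generated_ts G S = \<Inter> {T. is_transfer_system G T \<and> S \<subseteq> T}"

definition minimal_generating_set :: "('a, 'b) monoid_scheme \<Rightarrow> ('a set \<times> 'a set) set \<Rightarrow> bool" where
  "minimal_generating_set G S \<longleftrightarrow>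
     (\<forall>s\<in>S. generated_ts G (S - {s}) \<noteq> generated_ts G S)"

definition Cpq :: "nat \<Rightarrow> nat \<Rightarrow> nat \<Rightarrow> nat \<Rightarrow> int monoid" where
  "Cpq p q n m = integer_mod_group (p ^ n * q ^ m)"

text \<open>Twice the midpoint of an arrow (H,K) = (C_{p^a q^x}, C_{p^b q^y}): a + x + b + y,
  where the exponents are read off from the subgroup orders.\<close>
definition twice_midpoint :: "nat \<Rightarrow> nat \<Rightarrow> 'a set \<times> 'a set \<Rightarrow> nat" where
  "twice_midpoint p q A = (case A of (H, K) \<Rightarrow>
      multiplicity p (card H) + multiplicity q (card H) +
      multiplicity p (card K) + multiplicity q (card K))"

text \<open>R_M for M = k/2: all non-identity arrows of C_{p^n q^m} with midpoint k/2.\<close>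
definition R_mid :: "nat \<Rightarrow> nat \<Rightarrow> nat \<Rightarrow> nat \<Rightarrow> nat \<Rightarrow> (int set \<times> int set) set" where
  "R_mid p q n m k = {(H, K) \<in> arrows (Cpq p q n m). H \<noteq> K \<and> twice_midpoint p q (H, K) = k}"

end

(*
  Subgroups of C_{p^n q^m} correspond to the points (a, x) of the grid [0, n] x [0, m] ordered
  componentwise, intersection becoming the componentwise minimum, and conjugation is trivial. So a
  transfer system is a set of grid arrows closed under composition and under the restriction
  (u, v), w <= v |-> (inf u w, w); the midpoint of (u, v) is (|u| + |v|) / 2 with |(a, x)| = a + x.

  Let M = (n + m) / 2 = m + k. The generating set is R_M (without ((M-1,0),(M,1)) when k > 0)
  together with the covering arrows ((k,m),(k+1,m)), ((M,0),(M,1)) and, when k > 0,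
  ((M,0),(M+1,0)), all of midpoint M + 1/2. A composite has larger midpoint than its first factor
  and smaller than its second, and a proper restriction has smaller midpoint than the arrow
  restricted. Hence the arrows of midpoint at most M outside a set F, together with some arrows of
  midpoint M + 1/2, form a transfer system as soon as no arrow of F is a composite or a restriction
  of arrows of this set. Every generator s is separated from the others by such a system: for a
  covering arrow take F empty and drop s; for s in R_M let F consist of s, the arrows that compose
  with a covering generator to s, and the arrows from the source of s through the other covering
  generators out of the same point. Checking the two conditions is a case analysis on heights; it
  needs m >= 2, which makes the meet (k, 0) of the sources (k, m) and (M, 0) lie below height M - 1.
*)

theory Submission
  imports Defs "HOL-Library.Product_Order"
begin

definition lattice_transfer_system :: "'a::lattice \<Rightarrow> ('a \<times> 'a) set \<Rightarrow> bool" where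
  "lattice_transfer_system t T \<longleftrightarrow>
     T \<subseteq> {(u, v). u \<le> v \<and> v \<le> t} \<and>
     (\<forall>u. u \<le> t \<longrightarrow> (u, u) \<in> T) \<and>
     (\<forall>u v w. (u, v) \<in> T \<and> (v, w) \<in> T \<longrightarrow> (u, w) \<in> T) \<and>
     (\<forall>u v w. (u, v) \<in> T \<and> w \<le> v \<longrightarrow> (inf u w, w) \<in> T)"

lemma lattice_transfer_systemD:
  assumes "lattice_transfer_system t T"
  shows "(u, v) \<in> T \<Longrightarrow> u \<le> v \<and> v \<le> t"
    and "u \<le> t \<Longrightarrow> (u, u) \<in> T"
    and "(u, v) \<in> T \<Longrightarrow> (v, w) \<in> T \<Longrightarrow> (u, w) \<in> T"
    and "(u, v) \<in> T \<Longrightarrow> w \<le> v \<Longrightarrow> (inf u w, w) \<in> T"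
  using assms unfolding lattice_transfer_system_def by fast+

lemma strict_arrows_subset: "{(u, v). u < v \<and> v \<le> t} \<subseteq> {(u, v). u \<le> v \<and> v \<le> (t::'a::order)}"
  by auto

type_synonym grid_arrow = "(nat \<times> nat) \<times> nat \<times> nat"

definition height :: "nat \<times> nat \<Rightarrow> nat" where
  "height u = fst u + snd u"

definition grid_level :: "nat \<times> nat \<Rightarrow> nat \<Rightarrow> grid_arrow set" where
  "grid_level t L = {(u, v). u < v \<and> v \<le> t \<and> height u + height v = L}"

lemma height_strict_mono: "u < v \<Longrightarrow> height u < height v"
  by (cases u; cases v) (auto simp: height_def less_prod_def)

lemma height_mono: "u \<le> v \<Longrightarrow> height u \<le> height v"
  by (cases u; cases v) (auto simp: height_def)

lemma eq_if_le_height: "u \<le> v \<Longrightarrow> height v \<le> height u \<Longrightarrow> u = v"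
  by (cases u; cases v) (auto simp: height_def)

lemma height_inf_ge: "u \<le> v \<Longrightarrow> w \<le> v \<Longrightarrow> height u + height w \<le> height (inf u w) + height v"
  by (cases u; cases v; cases w) (auto simp: height_def inf_nat_def)

lemma cover_restriction_odd:
  assumes "u \<le> v" "w < v" "inf u w \<noteq> w" "height v = height u + 1"
  shows "odd (height (inf u w) + height w)"
proof -
  have "inf u w < w" using assms(3) by (simp add: less_le)
  then have "height w = height (inf u w) + 1"
    using height_inf_ge[OF assms(1) less_imp_le[OF assms(2)]] height_strict_mono assms(4) by fastforce
  then show ?thesis by simp
qed

lemma conjset_comm_group:
  assumes "comm_group G" "H \<subseteq> carrier G" "g \<in> carrier G"
  shows "conjset G g H = H"
proof -
  interpret comm_group G by fact
  have "g \<otimes>\<^bsub>G\<^esub> h \<otimes>\<^bsub>G\<^esub> inv\<^bsub>G\<^esub> g = h" if "h \<in> H" for h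
    using that assms(2,3) by (auto simp: m_comm[of g h] m_assoc)
  moreover have "conjset G g H = (\<lambda>h. g \<otimes>\<^bsub>G\<^esub> h \<otimes>\<^bsub>G\<^esub> inv\<^bsub>G\<^esub> g) ` H"
    unfolding conjset_def l_coset_def r_coset_def by blast
  ultimately show ?thesis by simp
qed

lemma minimal_generating_setI:
  assumes "\<And>s. s \<in> S \<Longrightarrow> \<exists>T. is_transfer_system G T \<and> S - {s} \<subseteq> T \<and> s \<notin> T"
  shows "minimal_generating_set G S"
  unfolding minimal_generating_set_def
proof
  fix s assume "s \<in> S"
  then obtain T where "is_transfer_system G T" "S - {s} \<subseteq> T" "s \<notin> T" using assms by blast
  then have "s \<notin> generated_ts G (S - {s})" by (auto simp: generated_ts_def)
  moreover have "s \<in> generated_ts G S" using \<open>s \<in> S\<close> by (auto simp: generated_ts_def)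
  ultimately show "generated_ts G (S - {s}) \<noteq> generated_ts G S" by blast
qed

lemma subgroup_integer_mod_group_multiples:
  assumes "0 < N" "0 < d" "d dvd N"
  shows "subgroup {z \<in> {0..<int N}. int d dvd z} (integer_mod_group N)"
proof (rule group.subgroupI[OF group_integer_mod_group])
  show "{z \<in> {0..<int N}. int d dvd z} \<subseteq> carrier (integer_mod_group N)"
    using assms by (auto simp: carrier_integer_mod_group)
  have "0 \<in> {z \<in> {0..<int N}. int d dvd z}" using assms by simp
  then show "{z \<in> {0..<int N}. int d dvd z} \<noteq> {}" by blast
  have "int d dvd int N" using assms by simp
  then show "inv\<^bsub>integer_mod_group N\<^esub> a \<in> {z \<in> {0..<int N}. int d dvd z}"
    if "a \<in> {z \<in> {0..<int N}. int d dvd z}" for a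
    using that assms by (simp add: carrier_integer_mod_group dvd_mod)
  show "a \<otimes>\<^bsub>integer_mod_group N\<^esub> b \<in> {z \<in> {0..<int N}. int d dvd z}"
    if "a \<in> {z \<in> {0..<int N}. int d dvd z}" "b \<in> {z \<in> {0..<int N}. int d dvd z}" for a b
    using that assms \<open>int d dvd int N\<close> by (simp add: dvd_mod)
qed

lemma subgroup_integer_mod_group_lincomb:
  assumes H: "subgroup H (integer_mod_group N)" and "x \<in> insert (int N) H" "y \<in> insert (int N) H"
  shows "(x + c * y) mod int N \<in> H"
proof -
  have "0 \<in> H" using subgroup.one_closed[OF H] by simp
  have "(c * y) mod int N \<in> H"
    using group.subgroup_int_pow_closed[OF group_integer_mod_group H, of y c] assms(3) \<open>0 \<in> H\<close>
    by (auto simp: int_pow_integer_mod_group)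
  then show ?thesis
    using subgroup.m_closed[OF H, of x "(c * y) mod int N"] assms(2) by (auto simp: mod_add_right_eq)
qed

lemma subgroup_integer_mod_group_eq_multiples:
  assumes "0 < N" and H: "subgroup H (integer_mod_group N)"
  obtains d where "0 < d" "d dvd N" "H = {z \<in> {0..<int N}. int d dvd z}"
proof -
  have sub: "H \<subseteq> {0..<int N}"
    using subgroup.subset[OF H] assms(1) by (simp add: carrier_integer_mod_group)
  have "0 \<in> H" using subgroup.one_closed[OF H] by simp
  \<comment> \<open>adjoining N to H avoids treating the trivial subgroup separately\<close>
  define P where "P = {z. 0 < z \<and> z \<in> insert (int N) H}"
  define g where "g = Min P"
  have "finite P" by (rule finite_subset[of _ "{0..int N}"]) (use sub in \<open>auto simp: P_def\<close>)
  moreover have "int N \<in> P" using assms(1) by (simp add: P_def)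
  ultimately have "g \<in> P" and g_least: "\<And>z. z \<in> P \<Longrightarrow> g \<le> z"
    unfolding g_def by (auto intro: Min_in)
  then have "0 < g" "g \<le> int N" using \<open>int N \<in> P\<close> by (auto simp: P_def)
  have multiple_in_H: "(c * g) mod int N \<in> H" for c
    using subgroup_integer_mod_group_lincomb[OF H, of 0 g c] \<open>0 \<in> H\<close> \<open>g \<in> P\<close> by (simp add: P_def)
  have g_dvd: "g dvd x" if "x \<in> insert (int N) H" for x
  proof (rule ccontr)
    assume "\<not> g dvd x"
    then have "0 < x mod g" using \<open>0 < g\<close> by (simp add: dvd_eq_mod_eq_0 order_less_le)
    have "x mod g < int N" using \<open>0 < g\<close> \<open>g \<le> int N\<close> pos_mod_bound[of g x] by linarith
    then have "(x mod g) mod int N = x mod g"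
      using \<open>0 < g\<close> by (intro mod_pos_pos_trivial) auto
    moreover have "x + (- (x div g)) * g = x mod g"
      by (simp add: minus_div_mult_eq_mod[symmetric])
    ultimately have "x mod g = (x + (- (x div g)) * g) mod int N"
      by (simp only:)
    also have "\<dots> \<in> H"
      using subgroup_integer_mod_group_lincomb[OF H that, of g "- (x div g)"] \<open>g \<in> P\<close>
      by (simp add: P_def)
    finally have "x mod g \<in> P" using \<open>0 < x mod g\<close> by (simp add: P_def)
    with g_least have "g \<le> x mod g" by blast
    with pos_mod_bound[OF \<open>0 < g\<close>, of x] show False by simp
  qed
  have "H = {z \<in> {0..<int N}. g dvd z}"
  proof (intro equalityI subsetI)
    fix z assume z: "z \<in> {z \<in> {0..<int N}. g dvd z}"
    then obtain c where "z = c * g" by (metis (mono_tags) dvdE mem_Collect_eq mult.commute)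
    then show "z \<in> H" using multiple_in_H[of c] z mod_pos_pos_trivial[of z "int N"] by simp
  qed (use sub g_dvd in auto)
  moreover have "nat g dvd N" using g_dvd[of "int N"] \<open>0 < g\<close> by (simp add: nat_dvd_iff)
  ultimately show ?thesis using that[of "nat g"] \<open>0 < g\<close> by simp
qed

lemma card_multiples_below:
  assumes "0 < d" "d dvd N"
  shows "card {z \<in> {0..<int N}. int d dvd z} = N div d"
proof -
  obtain c where c: "N = d * c" using assms by (auto elim!: dvdE)
  have "{z \<in> {0..<int N}. int d dvd z} = (\<lambda>j. int d * j) ` {0..<int c}"
    using assms by (auto simp: c zero_le_mult_iff elim!: dvdE)
  moreover have "inj_on (\<lambda>j. int d * j) {0..<int c}" using assms by (auto simp: inj_on_def)
  ultimately show ?thesis using assms c by (simp add: card_image)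
qed

locale subgroup_lattice_iso =
  fixes G :: "('a, 'b) monoid_scheme" and t :: "'p::lattice" and \<phi> :: "'p \<Rightarrow> 'a set"
  assumes comm_group: "comm_group G"
    and bij: "bij_betw \<phi> {..t} {H. subgroup H G}"
    and inf_eq: "\<And>u v. u \<le> t \<Longrightarrow> v \<le> t \<Longrightarrow> \<phi> (inf u v) = \<phi> u \<inter> \<phi> v"
begin

lemma map_eq_iff: "u \<le> t \<Longrightarrow> v \<le> t \<Longrightarrow> \<phi> u = \<phi> v \<longleftrightarrow> u = v"
  using bij_betw_imp_inj_on[OF bij] by (auto simp: inj_on_def)

lemma map_subset_iff:
  assumes "u \<le> t" "v \<le> t"
  shows "\<phi> u \<subseteq> \<phi> v \<longleftrightarrow> u \<le> v"
proof -
  have "inf u v \<le> t" using assms by (simp add: le_infI1)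
  have "\<phi> u \<subseteq> \<phi> v \<longleftrightarrow> \<phi> (inf u v) = \<phi> u" using inf_eq[OF assms] by blast
  also have "\<dots> \<longleftrightarrow> inf u v = u" using map_eq_iff[OF \<open>inf u v \<le> t\<close> assms(1)] .
  also have "\<dots> \<longleftrightarrow> u \<le> v" by (simp add: inf.absorb_iff1)
  finally show ?thesis .
qed

lemma map_subgroup: "u \<le> t \<Longrightarrow> subgroup (\<phi> u) G"
  using bij_betw_apply[OF bij] by simp

lemma subgroup_in_imageE:
  assumes "subgroup H G"
  obtains u where "u \<le> t" "H = \<phi> u"
  using assms bij_betw_imp_surj_on[OF bij] by (metis (mono_tags) atMost_iff imageE mem_Collect_eq)

lemma inj_on_arrows: "inj_on (map_prod \<phi> \<phi>) ({..t} \<times> {..t})"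
  using bij_betw_imp_inj_on[OF bij] bij_betw_imp_inj_on[OF bij] by (rule map_prod_inj_on)

lemma arrows_image:
  assumes "A \<subseteq> {(u, v). u \<le> v \<and> v \<le> t}"
  shows "map_prod \<phi> \<phi> ` A \<subseteq> arrows G"
proof
  fix x assume "x \<in> map_prod \<phi> \<phi> ` A"
  then obtain u v where "(u, v) \<in> A" "x = (\<phi> u, \<phi> v)" by auto
  moreover from this have "u \<le> v" "v \<le> t" "u \<le> t" using assms by (auto intro: order_trans)
  ultimately show "x \<in> arrows G" by (simp add: arrows_def map_subset_iff map_subgroup)
qed

lemma card_arrows_image:
  assumes "A \<subseteq> {(u, v). u \<le> v \<and> v \<le> t}"
  shows "card (map_prod \<phi> \<phi> ` A) = card A"
proof (rule card_image, rule inj_on_subset[OF inj_on_arrows])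
  show "A \<subseteq> {..t} \<times> {..t}" using assms by (auto intro: order_trans)
qed

lemma nonidentity_arrows_image:
  assumes "A \<subseteq> {(u, v). u < v \<and> v \<le> t}"
  shows "\<forall>(H, K) \<in> map_prod \<phi> \<phi> ` A. H \<noteq> K"
proof
  fix x assume "x \<in> map_prod \<phi> \<phi> ` A"
  then obtain u v where "(u, v) \<in> A" "x = (\<phi> u, \<phi> v)" by auto
  moreover from this have "u \<le> t" "v \<le> t" "u \<noteq> v"
    using assms by (auto dest: less_imp_le intro: order_trans)
  ultimately show "case x of (H, K) \<Rightarrow> H \<noteq> K" by (simp add: map_eq_iff)
qed

lemma arrow_imageE:
  assumes "(H, K) \<in> map_prod \<phi> \<phi> ` A"
  obtains u v where "(u, v) \<in> A" "H = \<phi> u" "K = \<phi> v"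
  using assms by auto

lemma trans_image:
  assumes T: "lattice_transfer_system t T"
    and "(H, K) \<in> map_prod \<phi> \<phi> ` T" "(K, L) \<in> map_prod \<phi> \<phi> ` T"
  shows "(H, L) \<in> map_prod \<phi> \<phi> ` T"
proof -
  obtain u v v' w where uv: "(u, v) \<in> T" and vw: "(v', w) \<in> T"
    and "H = \<phi> u" "K = \<phi> v" "K = \<phi> v'" "L = \<phi> w"
    using assms(2,3) by (elim arrow_imageE) simp
  moreover have "v \<le> t" "v' \<le> t"
    using lattice_transfer_systemD(1)[OF T uv] lattice_transfer_systemD(1)[OF T vw]
    by (auto intro: order_trans)
  ultimately have "v = v'" by (simp add: map_eq_iff)
  with \<open>H = \<phi> u\<close> \<open>L = \<phi> w\<close> show ?thesis
    using lattice_transfer_systemD(3)[OF T uv] vw by auto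
qed

lemma restrict_image:
  assumes T: "lattice_transfer_system t T"
    and "(H, K) \<in> map_prod \<phi> \<phi> ` T" "subgroup L G" "L \<subseteq> K"
  shows "(H \<inter> L, L) \<in> map_prod \<phi> \<phi> ` T"
proof -
  obtain u v where uv: "(u, v) \<in> T" and "H = \<phi> u" "K = \<phi> v"
    using assms(2) by (rule arrow_imageE)
  obtain w where "w \<le> t" "L = \<phi> w" using assms(3) by (rule subgroup_in_imageE)
  have "u \<le> t" "v \<le> t" using lattice_transfer_systemD(1)[OF T uv] by (auto intro: order_trans)
  then have "w \<le> v"
    using map_subset_iff[OF \<open>w \<le> t\<close> \<open>v \<le> t\<close>] assms(4) \<open>K = \<phi> v\<close> \<open>L = \<phi> w\<close> by simp
  then show ?thesis
    using lattice_transfer_systemD(4)[OF T uv] inf_eq[OF \<open>u \<le> t\<close> \<open>w \<le> t\<close>]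
      \<open>H = \<phi> u\<close> \<open>L = \<phi> w\<close>
    by (metis image_eqI map_prod_simp)
qed

lemma transfer_system_image:
  assumes T: "lattice_transfer_system t T"
  shows "is_transfer_system G (map_prod \<phi> \<phi> ` T)"
proof -
  have arrows: "map_prod \<phi> \<phi> ` T \<subseteq> arrows G"
    using lattice_transfer_systemD(1)[OF T] by (intro arrows_image) auto
  have refl: "(H, H) \<in> map_prod \<phi> \<phi> ` T" if H: "subgroup H G" for H
  proof -
    obtain u where "u \<le> t" "H = \<phi> u" using H by (rule subgroup_in_imageE)
    then show ?thesis using lattice_transfer_systemD(2)[OF T] by (auto intro: image_eqI)
  qed
  have conj: "(conjset G g H, conjset G g K) \<in> map_prod \<phi> \<phi> ` T"
    if "(H, K) \<in> map_prod \<phi> \<phi> ` T" "g \<in> carrier G" for H K g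
  proof -
    have "H \<subseteq> carrier G" "K \<subseteq> carrier G"
      using that(1) arrows by (auto simp: arrows_def dest: subgroup.subset)
    then show ?thesis using that conjset_comm_group[OF comm_group] by simp
  qed
  show ?thesis
    unfolding is_transfer_system_def
  proof (intro conjI allI impI)
    fix H K L assume "(H, K) \<in> map_prod \<phi> \<phi> ` T \<and> (K, L) \<in> map_prod \<phi> \<phi> ` T"
    then show "(H, L) \<in> map_prod \<phi> \<phi> ` T" by (meson trans_image[OF T])
  next
    fix H K L assume "(H, K) \<in> map_prod \<phi> \<phi> ` T \<and> subgroup L G \<and> L \<subseteq> K"
    then show "(H \<inter> L, L) \<in> map_prod \<phi> \<phi> ` T" by (meson restrict_image[OF T])
  qed (use arrows refl conj in auto)
qed

lemma minimal_generating_set_image: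
  assumes S: "S \<subseteq> {(u, v). u \<le> v \<and> v \<le> t}"
    and separable: "\<And>s. s \<in> S \<Longrightarrow> \<exists>T. lattice_transfer_system t T \<and> S - {s} \<subseteq> T \<and> s \<notin> T"
  shows "minimal_generating_set G (map_prod \<phi> \<phi> ` S)"
proof (rule minimal_generating_setI)
  fix s' assume "s' \<in> map_prod \<phi> \<phi> ` S"
  then obtain s where s: "s \<in> S" "s' = map_prod \<phi> \<phi> s" by (rule imageE)
  then obtain T where T: "lattice_transfer_system t T" "S - {s} \<subseteq> T" "s \<notin> T"
    using separable by blast
  have "s \<in> {..t} \<times> {..t}"
    using S s(1) by (cases s) (auto intro: order_trans)
  moreover have "T \<subseteq> {..t} \<times> {..t}"
    using lattice_transfer_systemD(1)[OF T(1)] by (auto intro: order_trans)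
  ultimately have s'_notin: "s' \<notin> map_prod \<phi> \<phi> ` T"
    using inj_on_image_mem_iff[OF inj_on_arrows] s(2) T(3) by simp
  have "map_prod \<phi> \<phi> ` S - {s'} \<subseteq> map_prod \<phi> \<phi> ` (S - {s})"
    using s(2) by auto
  also have "\<dots> \<subseteq> map_prod \<phi> \<phi> ` T"
    using T(2) by (rule image_mono)
  finally show "\<exists>T. is_transfer_system G T \<and> map_prod \<phi> \<phi> ` S - {s'} \<subseteq> T \<and> s' \<notin> T"
    using transfer_system_image[OF T(1)] s'_notin by blast
qed

end

locale two_prime_cyclic =
  fixes p q n m :: nat
  assumes p: "Factorial_Ring.prime p" and q: "Factorial_Ring.prime q" and p_ne_q: "p \<noteq> q"
begin

text \<open>\<open>subgroup_at (a, x)\<close> is the subgroup \<open>C_{p^a q^x}\<close> of \<open>Z/p^n q^m\<close>.\<close>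

definition subgroup_at :: "nat \<times> nat \<Rightarrow> int set" where
  "subgroup_at u = {z \<in> {0..<int (p ^ n * q ^ m)}. int (p ^ (n - fst u) * q ^ (m - snd u)) dvd z}"

lemma order_pos: "0 < p ^ n * q ^ m"
  using p q by (simp add: prime_gt_0_nat)

lemma cofactor_pos: "0 < p ^ (n - a) * q ^ (m - x)"
  using p q by (simp add: prime_gt_0_nat)

lemma cofactor_mult:
  assumes "a \<le> n" "x \<le> m"
  shows "p ^ (n - a) * q ^ (m - x) * (p ^ a * q ^ x) = p ^ n * q ^ m"
  using assms by (simp add: mult_ac power_add[symmetric])

lemma cofactor_dvd: "a \<le> n \<Longrightarrow> x \<le> m \<Longrightarrow> p ^ (n - a) * q ^ (m - x) dvd p ^ n * q ^ m"
  by (metis cofactor_mult dvd_triv_left)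

lemma mem_subgroup_at:
  "z \<in> subgroup_at u \<longleftrightarrow>
     0 \<le> z \<and> z < int (p ^ n * q ^ m) \<and> int p ^ (n - fst u) dvd z \<and> int q ^ (m - snd u) dvd z"
proof -
  have "coprime (int p ^ (n - fst u)) (int q ^ (m - snd u))"
    using p q p_ne_q by (simp add: primes_coprime)
  then show ?thesis
    by (auto simp: subgroup_at_def divides_mult intro: dvd_mult_left dvd_mult_right)
qed

lemma subgroup_at_inf: "subgroup_at (inf u v) = subgroup_at u \<inter> subgroup_at v"
proof -
  have power_dvd_iff: "w ^ (k - min a b) dvd z \<longleftrightarrow> w ^ (k - a) dvd z \<and> w ^ (k - b) dvd z"
    for w z :: int and k a b :: nat
  proof (cases "a \<le> b")
    case True
    then have "w ^ (k - b) dvd w ^ (k - a)" by (intro le_imp_power_dvd) auto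
    with True show ?thesis by (auto simp: min_def intro: dvd_trans)
  next
    case False
    then have "w ^ (k - a) dvd w ^ (k - b)" by (intro le_imp_power_dvd) auto
    with False show ?thesis by (auto simp: min_def intro: dvd_trans)
  qed
  show ?thesis
    by (cases u; cases v) (auto simp: mem_subgroup_at inf_nat_def power_dvd_iff)
qed

lemma card_subgroup_at:
  assumes "u \<le> (n, m)"
  shows "card (subgroup_at u) = p ^ fst u * q ^ snd u"
proof -
  obtain a x where u: "u = (a, x)" "a \<le> n" "x \<le> m" using assms by (cases u) auto
  have "card (subgroup_at u) = p ^ n * q ^ m div (p ^ (n - a) * q ^ (m - x))"
    unfolding subgroup_at_def u(1) fst_conv snd_conv
    by (rule card_multiples_below[OF cofactor_pos cofactor_dvd[OF u(2,3)]])
  also have "\<dots> = p ^ a * q ^ x"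
    using cofactor_pos[of a x] by (simp flip: cofactor_mult[OF u(2,3)])
  finally show ?thesis by (simp add: u(1))
qed

lemma multiplicity_p: "multiplicity p (p ^ a * q ^ x) = a"
proof -
  have "\<not> p dvd q ^ x" using p q p_ne_q by (metis prime_dvd_power primes_dvd_imp_eq)
  then have "multiplicity p (q ^ x * p ^ a) = multiplicity p (p ^ a)"
    using p by (intro multiplicity_prime_elem_times_other) auto
  then show ?thesis using p by (simp add: mult.commute)
qed

lemma multiplicity_q: "multiplicity q (p ^ a * q ^ x) = x"
proof -
  have "\<not> q dvd p ^ a" using p q p_ne_q by (metis prime_dvd_power primes_dvd_imp_eq)
  then have "multiplicity q (p ^ a * q ^ x) = multiplicity q (q ^ x)"
    using q by (intro multiplicity_prime_elem_times_other) auto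
  then show ?thesis using q by simp
qed

lemma twice_midpoint_subgroup_at:
  "u \<le> (n, m) \<Longrightarrow> v \<le> (n, m) \<Longrightarrow> twice_midpoint p q (subgroup_at u, subgroup_at v) = height u + height v"
  by (simp add: twice_midpoint_def card_subgroup_at multiplicity_p multiplicity_q height_def)

lemma subgroup_at_subgroup:
  assumes "u \<le> (n, m)"
  shows "subgroup (subgroup_at u) (Cpq p q n m)"
  unfolding subgroup_at_def Cpq_def
  using assms by (intro subgroup_integer_mod_group_multiples order_pos cofactor_pos cofactor_dvd)
    (auto simp: less_eq_prod_def)

lemma subgroup_eq_subgroup_at:
  assumes "subgroup H (Cpq p q n m)"
  obtains u where "u \<le> (n, m)" "H = subgroup_at u"
proof -
  obtain d where d: "d dvd p ^ n * q ^ m" "H = {z \<in> {0..<int (p ^ n * q ^ m)}. int d dvd z}"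
    using subgroup_integer_mod_group_eq_multiples[OF order_pos] assms unfolding Cpq_def by metis
  obtain d1 d2 where "d = d1 * d2" "d1 dvd p ^ n" "d2 dvd q ^ m"
    using division_decomp[OF d(1)] by blast
  then obtain i j where "i \<le> n" "j \<le> m" "d = p ^ i * q ^ j"
    using p q by (auto simp: divides_primepow_nat)
  then have "H = subgroup_at (n - i, m - j)" by (simp add: d(2) subgroup_at_def)
  then show ?thesis using that[of "(n - i, m - j)"] by simp
qed

lemma subgroup_lattice_iso: "subgroup_lattice_iso (Cpq p q n m) (n, m) subgroup_at"
proof (rule subgroup_lattice_iso.intro)
  show "comm_group (Cpq p q n m)" by (simp add: Cpq_def)
  have "inj_on subgroup_at {..(n, m)}"
  proof (rule inj_onI)
    fix u v assume "u \<in> {..(n, m)}" "v \<in> {..(n, m)}" "subgroup_at u = subgroup_at v"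
    then have "p ^ fst u * q ^ snd u = p ^ fst v * q ^ snd v"
      using card_subgroup_at[of u] card_subgroup_at[of v] by simp
    then show "u = v" using multiplicity_p multiplicity_q by (metis prod.expand)
  qed
  moreover have "subgroup_at ` {..(n, m)} = {H. subgroup H (Cpq p q n m)}"
    using subgroup_at_subgroup by (auto elim!: subgroup_eq_subgroup_at)
  ultimately show "bij_betw subgroup_at {..(n, m)} {H. subgroup H (Cpq p q n m)}"
    by (simp add: bij_betw_def)
qed (rule subgroup_at_inf)

end

sublocale two_prime_cyclic \<subseteq> subgroup_lattice_iso "Cpq p q n m" "(n, m)" subgroup_at
  by (rule subgroup_lattice_iso)

context two_prime_cyclic
begin

lemma R_mid_eq_image:
  "R_mid p q n m L =
     map_prod subgroup_at subgroup_at ` grid_level (n, m) L"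
proof (intro equalityI subsetI)
  fix A assume "A \<in> R_mid p q n m L"
  then obtain H K where A: "A = (H, K)" "subgroup H (Cpq p q n m)" "subgroup K (Cpq p q n m)"
    "H \<subseteq> K" "H \<noteq> K" "twice_midpoint p q (H, K) = L"
    by (auto simp: R_mid_def arrows_def)
  obtain u v where "u \<le> (n, m)" "v \<le> (n, m)" "H = subgroup_at u" "K = subgroup_at v"
    using A(2,3) by (metis subgroup_in_imageE)
  with A show "A \<in> map_prod subgroup_at subgroup_at ` grid_level (n, m) L"
    by (auto simp: grid_level_def map_subset_iff twice_midpoint_subgroup_at less_le)
next
  fix A assume "A \<in> map_prod subgroup_at subgroup_at ` grid_level (n, m) L"
  then obtain u v where A: "A = (subgroup_at u, subgroup_at v)" "u < v" "v \<le> (n, m)"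
    "height u + height v = L"
    by (auto simp: grid_level_def)
  then have "u \<le> (n, m)" by simp
  with A show "A \<in> R_mid p q n m L"
    by (auto simp: R_mid_def arrows_def map_subgroup map_subset_iff map_eq_iff twice_midpoint_subgroup_at)
qed

lemma card_R_mid: "card (R_mid p q n m L) = card (grid_level (n, m) L)"
proof -
  have "grid_level (n, m) L \<subseteq> {(u, v). u \<le> v \<and> v \<le> (n, m)}"
    using strict_arrows_subset by (auto simp: grid_level_def)
  then show ?thesis by (simp add: R_mid_eq_image card_arrows_image)
qed

end

definition truncation :: "nat \<times> nat \<Rightarrow> nat \<Rightarrow> grid_arrow set \<Rightarrow> grid_arrow set \<Rightarrow> grid_arrow set" where
  "truncation t L F Z = {(u, v). u \<le> v \<and> v \<le> t \<and>
     (u = v \<or> (height u + height v \<le> L \<and> (u, v) \<notin> F) \<or> (height u + height v = L + 1 \<and> (u, v) \<in> Z))}"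

lemma truncation_trans:
  assumes uv: "(u, v) \<in> truncation t L F Z" and vw: "(v, w) \<in> truncation t L F Z"
    and not_composite: "u < v \<Longrightarrow> v < w \<Longrightarrow> (u, w) \<notin> F"
  shows "(u, w) \<in> truncation t L F Z"
proof (cases "u = v \<or> v = w")
  case True
  with uv vw show ?thesis by auto
next
  case False
  with uv vw have "u < v" "v < w" "w \<le> t" "height v + height w \<le> L + 1"
    by (auto simp: truncation_def)
  then have "height u + height w \<le> L"
    using height_strict_mono[of u v] by simp
  with \<open>u < v\<close> \<open>v < w\<close> \<open>w \<le> t\<close> not_composite show ?thesis
    by (auto simp: truncation_def)
qed

lemma truncation_restrict:
  assumes uv: "(u, v) \<in> truncation t L F Z" and "w \<le> v"
    and not_restriction: "w < v \<Longrightarrow> inf u w \<noteq> w \<Longrightarrow> (inf u w, w) \<notin> F"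
  shows "(inf u w, w) \<in> truncation t L F Z"
proof -
  have "u \<le> v" "v \<le> t" using uv by (auto simp: truncation_def)
  show ?thesis
  proof (cases "w = v \<or> inf u w = w")
    case True
    with uv \<open>u \<le> v\<close> \<open>w \<le> v\<close> \<open>v \<le> t\<close> show ?thesis
      by (auto simp: truncation_def inf_absorb1)
  next
    case False
    then have "w < v" "inf u w \<noteq> w" "u \<noteq> v" using \<open>w \<le> v\<close> by (auto simp: inf_absorb2)
    have "height (inf u w) + height w < height u + height v"
      using height_mono[of "inf u w" u] height_strict_mono[OF \<open>w < v\<close>] by simp
    moreover have "height u + height v \<le> L + 1"
      using uv \<open>u \<noteq> v\<close> by (auto simp: truncation_def)
    ultimately show ?thesis
      using not_restriction \<open>w < v\<close> \<open>inf u w \<noteq> w\<close> \<open>v \<le> t\<close> by (auto simp: truncation_def)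
  qed
qed

lemma truncation_transfer_system:
  fixes t :: "nat \<times> nat" and L :: nat and F Z :: "grid_arrow set"
  defines "T \<equiv> truncation t L F Z"
  assumes not_composite: "\<And>u v w. u < v \<Longrightarrow> v < w \<Longrightarrow> (u, v) \<in> T \<Longrightarrow> (v, w) \<in> T \<Longrightarrow> (u, w) \<notin> F"
    and not_restriction: "\<And>u v w. (u, v) \<in> T \<Longrightarrow> w < v \<Longrightarrow> inf u w \<noteq> w \<Longrightarrow> (inf u w, w) \<notin> F"
  shows "lattice_transfer_system t T"
  unfolding lattice_transfer_system_def
proof (intro conjI allI impI)
  show "T \<subseteq> {(u, v). u \<le> v \<and> v \<le> t}" and "u \<le> t \<Longrightarrow> (u, u) \<in> T" for u
    by (auto simp: T_def truncation_def)
  show "(u, w) \<in> T" if "(u, v) \<in> T \<and> (v, w) \<in> T" for u v w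
    using that not_composite unfolding T_def by (blast intro: truncation_trans)
  show "(inf u w, w) \<in> T" if "(u, v) \<in> T \<and> w \<le> v" for u v w
    using that not_restriction unfolding T_def by (blast intro: truncation_restrict)
qed

lemma truncation_composite:
  assumes "u < v" "v < w" "(u, v) \<in> truncation t L F Z" "(v, w) \<in> truncation t L F Z"
    and "L \<le> height u + height w"
  shows "(v, w) \<in> Z \<and> (u, v) \<notin> F"
proof -
  have "height u < height v" "height v < height w"
    using assms(1,2) by (auto intro: height_strict_mono)
  with assms show ?thesis by (auto simp: truncation_def)
qed

lemma truncation_restriction:
  assumes "(u, v) \<in> truncation t L F Z" "w < v" "inf u w \<noteq> w"
    and "L \<le> height (inf u w) + height w"
  shows "(u, v) \<in> Z"
proof -
  have "u \<noteq> v" using assms(2,3) by (auto simp: inf_absorb2)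
  have "height (inf u w) + height w < height u + height v"
    using height_mono[of "inf u w" u] height_strict_mono[OF assms(2)] by simp
  with assms \<open>u \<noteq> v\<close> show ?thesis by (auto simp: truncation_def)
qed

locale even_grid =
  fixes n m k :: nat
  assumes n_eq: "n = m + 2 * k" and two_le_m: "2 \<le> m"
begin

abbreviation mid :: nat where "mid \<equiv> m + k"

abbreviation level :: "grid_arrow set" where
  "level \<equiv> grid_level (n, m) (2 * mid)"

definition edges :: "grid_arrow set" where
  "edges = {((k, m), (k + 1, m)), ((mid, 0), (mid, 1))} \<union>
     (if k = 0 then {} else {((mid, 0), (mid + 1, 0))})"

text \<open>Restricting \<open>((mid - 1, 0), (mid + 1, 0))\<close> to \<open>(mid, 0)\<close> and composing with the edge
  \<open>((mid, 0), (mid, 1))\<close> generates the redundant arrow.\<close>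

definition redundant :: "grid_arrow set" where
  "redundant = (if k = 0 then {} else {((mid - 1, 0), (mid, 1))})"

definition generators :: "grid_arrow set" where
  "generators = (level - redundant) \<union> edges"

text \<open>Besides \<open>(u0, v0)\<close> itself, a transfer system containing the other generators but not
  \<open>(u0, v0)\<close> must omit the arrows composing with an edge to \<open>(u0, v0)\<close> and the arrows restricting
  to those.\<close>

definition blockers :: "nat \<times> nat \<Rightarrow> nat \<times> nat \<Rightarrow> grid_arrow set" where
  "blockers u0 v0 = {(u0, v0)} \<union> {(u0, w) | w. u0 \<le> w \<and> (w, v0) \<in> edges} \<union>
     {(u0, v) | v w. u0 \<le> w \<and> (w, v0) \<in> edges \<and> (w, v) \<in> edges}"

lemma edgeD:
  assumes "(w, v) \<in> edges"
  shows "w < v" "v \<le> (n, m)" "height w = mid" "height v = mid + 1"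
  using assms two_le_m by (auto simp: edges_def height_def n_eq less_prod_def split: if_splits)

lemma edge_target_unique: "(v, x) \<in> edges \<Longrightarrow> (w, x) \<in> edges \<Longrightarrow> v = w"
  using two_le_m unfolding edges_def by (simp split: if_splits) (elim disjE conjE; simp)+

lemma edges_same_source:
  assumes "(w, v) \<in> edges" "(w, v') \<in> edges" "v \<noteq> v'"
  shows "w = (mid, 0) \<and> k \<noteq> 0 \<and> (v = (mid, 1) \<or> v' = (mid, 1))"
  using assms two_le_m unfolding edges_def by (simp split: if_splits) (elim disjE conjE; simp)+

lemma edge_to_every_cover:
  assumes "(w, v0) \<in> edges" "w < v" "v \<le> (n, m)" "height v = mid + 1"
  shows "(w, v) \<in> edges"
proof -
  obtain a y where v: "v = (a, y)" by (cases v)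
  from assms show ?thesis
    unfolding edges_def v
    by (simp add: height_def n_eq less_prod_def split: if_splits) (elim disjE conjE; simp; presburger)+
qed

lemma height_inf_edge_sources:
  assumes "(u, v) \<in> edges" "(w, x) \<in> edges" "inf u w \<noteq> w"
  shows "height (inf u w) + 1 \<noteq> mid"
  using assms two_le_m unfolding edges_def
  by (simp add: height_def inf_nat_def split: if_splits) (elim disjE conjE; simp)+

abbreviation avoiding :: "nat \<times> nat \<Rightarrow> nat \<times> nat \<Rightarrow> grid_arrow set" where
  "avoiding u0 v0 \<equiv> truncation (n, m) (2 * mid) (blockers u0 v0) edges"

lemma blockersE:
  assumes "(u, w) \<in> blockers u0 v0"
  obtains (self) "u = u0" "w = v0"
    | (edge_source) "u = u0" "u0 \<le> w" "(w, v0) \<in> edges"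
    | (edge_target) w' where "u = u0" "u0 \<le> w'" "(w', v0) \<in> edges" "(w', w) \<in> edges"
  using assms unfolding blockers_def by blast

lemma blockers_edge_sourceI: "u0 \<le> w \<Longrightarrow> (w, v0) \<in> edges \<Longrightarrow> (u0, w) \<in> blockers u0 v0"
  unfolding blockers_def by blast

lemma blockers_edge_targetI:
  "u0 \<le> w \<Longrightarrow> (w, v0) \<in> edges \<Longrightarrow> (w, v) \<in> edges \<Longrightarrow> (u0, v) \<in> blockers u0 v0"
  unfolding blockers_def by blast

lemma level_height: "(u, v) \<in> level \<Longrightarrow> height u + height v = 2 * mid"
  by (simp add: grid_level_def)

lemma level_source_height:
  assumes "(u0, v0) \<in> level" "(w, v0) \<in> edges"
  shows "height u0 + 1 = mid"
  using level_height[OF assms(1)] edgeD(4)[OF assms(2)] by simp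

lemma blockers_not_composite:
  assumes s: "(u0, v0) \<in> level" and "u < v" "v < w"
    and uv: "(u, v) \<in> avoiding u0 v0" and vw: "(v, w) \<in> avoiding u0 v0"
  shows "(u, w) \<notin> blockers u0 v0"
proof
  assume "(u, w) \<in> blockers u0 v0"
  then show False
  proof (cases rule: blockersE)
    case self
    then have "(v, w) \<in> edges" "(u, v) \<notin> blockers u0 v0"
      using truncation_composite[OF \<open>u < v\<close> \<open>v < w\<close> uv vw] level_height[OF s] by auto
    moreover have "(u, v) \<in> blockers u0 v0"
      using self \<open>(v, w) \<in> edges\<close> \<open>u < v\<close> by (auto intro: blockers_edge_sourceI)
    ultimately show False by simp
  next
    case edge_source
    have "height v < height w" "height u < height v"
      using \<open>u < v\<close> \<open>v < w\<close> by (auto intro: height_strict_mono)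
    moreover have "height w = mid" "height u + 1 = mid"
      using edge_source edgeD[OF edge_source(3)] level_height[OF s] by auto
    ultimately show False by simp
  next
    case (edge_target w')
    have "height u + height w = 2 * mid"
      using edge_target edgeD[OF edge_target(3)] edgeD[OF edge_target(4)] level_height[OF s]
      by simp
    then have "(v, w) \<in> edges" "(u, v) \<notin> blockers u0 v0"
      using truncation_composite[OF \<open>u < v\<close> \<open>v < w\<close> uv vw] by auto
    moreover have "v = w'" using edge_target_unique \<open>(v, w) \<in> edges\<close> edge_target(4) by blast
    then have "(u, v) \<in> blockers u0 v0"
      using edge_target by (auto intro: blockers_edge_sourceI)
    ultimately show False by simp
  qed
qed

lemma edge_source_not_restriction:
  assumes s: "(u0, v0) \<in> level" and edge: "(w, v0) \<in> edges"
    and uv: "(u, v) \<in> avoiding u0 v0" and "w < v"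
  shows "inf u w \<noteq> u0"
proof
  assume r: "inf u w = u0"
  have "height w = mid" "height u0 + 1 = mid"
    using edgeD[OF edge] level_source_height[OF s edge] by auto
  then have "inf u w \<noteq> w" using r by auto
  show False
  proof (cases "(u, v) \<in> edges")
    case True
    then show False
      using height_inf_edge_sources[OF True edge \<open>inf u w \<noteq> w\<close>] r \<open>height u0 + 1 = mid\<close> by simp
  next
    case False
    have "u \<noteq> v" using \<open>w < v\<close> \<open>inf u w \<noteq> w\<close> by (auto simp: inf_absorb2)
    then have "height u + height v \<le> 2 * mid" "(u, v) \<notin> blockers u0 v0" "v \<le> (n, m)"
      using uv False by (auto simp: truncation_def)
    moreover have "height u0 \<le> height u" "height w < height v"
      using height_mono[of "inf u w" u] height_strict_mono[OF \<open>w < v\<close>] r by auto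
    ultimately have "height u \<le> height u0" "height v = mid + 1"
      using \<open>height w = mid\<close> \<open>height u0 + 1 = mid\<close> by auto
    then have "u = u0" "(w, v) \<in> edges"
      using eq_if_le_height[of u0 u] r edge_to_every_cover[OF edge \<open>w < v\<close> \<open>v \<le> (n, m)\<close>]
      by (auto dest: sym)
    moreover have "u0 \<le> w" using r by (auto dest: sym)
    ultimately have "(u, v) \<in> blockers u0 v0"
      using edge by (auto intro: blockers_edge_targetI)
    with \<open>(u, v) \<notin> blockers u0 v0\<close> show False by simp
  qed
qed

lemma blockers_not_restriction:
  assumes s: "(u0, v0) \<in> level" and uv: "(u, v) \<in> avoiding u0 v0"
    and "w < v" and "inf u w \<noteq> w"
  shows "(inf u w, w) \<notin> blockers u0 v0"
proof
  have "height (inf u w) + height w \<noteq> 2 * mid"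
  proof
    assume "height (inf u w) + height w = 2 * mid"
    then have "(u, v) \<in> edges"
      using truncation_restriction[OF uv \<open>w < v\<close> \<open>inf u w \<noteq> w\<close>] by simp
    then have "odd (height (inf u w) + height w)"
      using cover_restriction_odd[OF _ \<open>w < v\<close> \<open>inf u w \<noteq> w\<close>] edgeD(1,3,4) by (simp add: less_imp_le)
    with \<open>height (inf u w) + height w = 2 * mid\<close> show False by simp
  qed
  assume "(inf u w, w) \<in> blockers u0 v0"
  then show False
  proof (cases rule: blockersE)
    case edge_source
    then show False using edge_source_not_restriction[OF s edge_source(3) uv \<open>w < v\<close>] by simp
  next
    case self
    with level_height[OF s] \<open>height (inf u w) + height w \<noteq> 2 * mid\<close> show False by simp
  next
    case (edge_target w')
    then have "height (inf u w) + height w = 2 * mid"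
      using edgeD[OF edge_target(3)] edgeD[OF edge_target(4)] level_height[OF s] by simp
    with \<open>height (inf u w) + height w \<noteq> 2 * mid\<close> show False by simp
  qed
qed

lemma avoiding_transfer_system:
  assumes "(u0, v0) \<in> level"
  shows "lattice_transfer_system (n, m) (avoiding u0 v0)"
  by (intro truncation_transfer_system blockers_not_composite[OF assms] blockers_not_restriction[OF assms])

lemma blockers_inter_generators:
  assumes s: "(u0, v0) \<in> level - redundant" and g: "g \<in> generators" "g \<in> blockers u0 v0"
  shows "g = (u0, v0)"
proof -
  obtain u w where g_eq: "g = (u, w)" by (cases g)
  have "(u, w) \<in> blockers u0 v0" using g g_eq by simp
  then show ?thesis
  proof (cases rule: blockersE)
    case self
    then show ?thesis by (simp add: g_eq)
  next
    case edge_source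
    have "height u + 1 = mid" "height w = mid"
      using edge_source level_source_height[of u0 v0 w] edgeD[OF edge_source(3)] s by auto
    then have "g \<notin> level" "g \<notin> edges"
      using level_height[of u w] edgeD(3)[of u w] by (auto simp: g_eq)
    with g show ?thesis by (simp add: generators_def)
  next
    case (edge_target w')
    have "height u0 + 1 = mid"
      using level_source_height[of u0 v0 w'] edge_target(3) s by auto
    show ?thesis
    proof (rule ccontr)
      assume "g \<noteq> (u0, v0)"
      then have "w \<noteq> v0" using edge_target(1) g_eq by simp
      then have w': "w' = (mid, 0)" "k \<noteq> 0" and "v0 = (mid, 1) \<or> w = (mid, 1)"
        using edges_same_source[OF edge_target(4,3)] by auto
      moreover have "u0 = (mid - 1, 0)"
        using \<open>height u0 + 1 = mid\<close> edge_target(2) w' by (cases u0) (auto simp: height_def)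
      ultimately have "(u0, v0) \<in> redundant \<or> g \<in> redundant"
        using edge_target(1) g_eq by (auto simp: redundant_def)
      moreover have "g \<notin> edges"
        using edge_target(1) \<open>height u0 + 1 = mid\<close> edgeD(3)[of u w] by (auto simp: g_eq)
      ultimately show False using s g by (auto simp: generators_def)
    qed
  qed
qed

lemma generators_nonidentity: "generators \<subseteq> {(u, v). u < v \<and> v \<le> (n, m)}"
  using edgeD by (auto simp: generators_def grid_level_def)

lemma generator_in_truncation:
  assumes "g \<in> generators" "g \<notin> F" "g \<in> edges \<Longrightarrow> g \<in> Z"
  shows "g \<in> truncation (n, m) (2 * mid) F Z"
proof -
  obtain u v where g: "g = (u, v)" by (cases g)
  show ?thesis
  proof (cases "g \<in> edges")
    case True
    with assms show ?thesis using edgeD[of u v] by (auto simp: g truncation_def less_imp_le)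
  next
    case False
    with assms have "(u, v) \<in> level" by (simp add: g generators_def)
    with assms show ?thesis by (auto simp: g truncation_def grid_level_def less_imp_le)
  qed
qed

lemma generators_separable:
  assumes "s \<in> generators"
  shows "\<exists>T. lattice_transfer_system (n, m) T \<and> generators - {s} \<subseteq> T \<and> s \<notin> T"
proof (cases "s \<in> edges")
  case True
  let ?T = "truncation (n, m) (2 * mid) {} (edges - {s})"
  have "lattice_transfer_system (n, m) ?T"
    by (rule truncation_transfer_system) auto
  moreover have "generators - {s} \<subseteq> ?T"
    by (blast intro: generator_in_truncation)
  moreover have "s \<notin> ?T"
    using True edgeD[of "fst s" "snd s"] by (cases s) (auto simp: truncation_def)
  ultimately show ?thesis by blast
next
  case False
  then obtain u0 v0 where s: "s = (u0, v0)" "(u0, v0) \<in> level - redundant"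
    using assms by (cases s) (auto simp: generators_def)
  have "generators - {s} \<subseteq> avoiding u0 v0"
    using s blockers_inter_generators by (blast intro: generator_in_truncation)
  moreover have "s \<notin> avoiding u0 v0"
    using s by (auto simp: grid_level_def truncation_def blockers_def)
  ultimately show ?thesis
    using avoiding_transfer_system[of u0 v0] s by blast
qed

lemma card_generators: "card generators = card level + 2"
proof -
  have "level \<subseteq> ({..n} \<times> {..m}) \<times> ({..n} \<times> {..m})"
    by (auto simp: grid_level_def less_prod_def)
  then have "finite level" by (rule finite_subset) simp
  have "redundant \<subseteq> level"
    unfolding redundant_def grid_level_def using two_le_m by (auto simp: height_def n_eq less_prod_def)
  have "level \<inter> edges = {}"
    using level_height edgeD by fastforce
  have "card edges = card redundant + 2"
    using two_le_m by (auto simp: edges_def redundant_def)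
  have "card generators = card (level - redundant) + card edges"
    unfolding generators_def using \<open>finite level\<close> \<open>level \<inter> edges = {}\<close>
    by (intro card_Un_disjoint) (auto simp: edges_def)
  also have "card (level - redundant) = card level - card redundant"
    using \<open>redundant \<subseteq> level\<close> \<open>finite level\<close> by (simp add: card_Diff_subset finite_subset)
  finally show ?thesis
    using \<open>card edges = card redundant + 2\<close> card_mono[OF \<open>finite level\<close> \<open>redundant \<subseteq> level\<close>] by simp
qed

end

theorem lemma7p4:
  fixes p q n m :: nat
  assumes "Factorial_Ring.prime p" and "Factorial_Ring.prime q" and "p \<noteq> q"
    and "m \<ge> 2" and "n \<ge> m" and "even (n + m)"
  shows "\<exists>S. S \<subseteq> arrows (Cpq p q n m) \<and> (\<forall>(H, K)\<in>S. H \<noteq> K) \<and>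
             minimal_generating_set (Cpq p q n m) S \<and>
             card S = card (R_mid p q n m (n + m)) + 2"
proof -
  have "\<exists>k. n = m + 2 * k" using \<open>n \<ge> m\<close> \<open>even (n + m)\<close> by presburger
  then obtain k where "n = m + 2 * k" ..
  interpret even_grid n m k by unfold_locales (use \<open>n = m + 2 * k\<close> \<open>m \<ge> 2\<close> in auto)
  interpret two_prime_cyclic p q n m by unfold_locales (use assms in auto)
  have strict: "generators \<subseteq> {(u, v). u < v \<and> v \<le> (n, m)}" by (rule generators_nonidentity)
  then have box: "generators \<subseteq> {(u, v). u \<le> v \<and> v \<le> (n, m)}"
    using strict_arrows_subset by (rule order_trans)
  have "n + m = 2 * (m + k)" using \<open>n = m + 2 * k\<close> by simp
  then have "card (map_prod subgroup_at subgroup_at ` generators) = card (R_mid p q n m (n + m)) + 2"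
    using card_arrows_image[OF box] card_generators card_R_mid by simp
  then show ?thesis
    using arrows_image[OF box] nonidentity_arrows_image[OF strict]
      minimal_generating_set_image[OF box generators_separable] by blast
qed

end
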